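(* For every $w\in W$, the Chari operator $T_w$ maps the subring $\mathbb{Z}[W_{i,a}^{\pm1}]_{i\in I,a\in\mathbb{C}^\times}\subset\mathcal{Y}$ into itself.
   Context: Let $\mathfrak{g}$ be a finite-dimensional simple complex Lie algebra with Dynkin index set $I=\{1,\dots,n\}$ and Cartan matrix $C=(C_{i,j})_{i,j\in I}$. Let $d_i$ ($i\in I$) be the relatively prime positive integers such that $(d_iC_{i,j})$ is symmetric, and let $d=\max_i d_i$ be the lacing number. Let $W$ be the Weyl group, generated by simple reflections $s_i$. Fix $q\in\mathbb{C}^\times$ not a root of unity and set $q_i=q^{d_i}$. Let $\mathcal{Y}=\mathbb{Z}[Y_{i,a}^{\pm1}]_{i\in I,a\in\mathbb{C}^\times}$ and $$A_{i,a}=Y_{i,aq_i^{-1}}Y_{i,aq_i}\Big(\prod_{j:C_{j,i}=-1}Y_{j,a}\prod_{j:C_{j,i}=-2}Y_{j,aq^{-1}}Y_{j,aq}\prod_{j:C_{j,i}=-3}Y_{j,aq^{-2}}Y_{j,a}Y_{j,aq^2}\Big)^{-1}.$$ The Chari operators are the ring automorphisms $T_i$ ($i\in I$) of $\mathcal{Y}$ with $T_i(Y_{i,a})=Y_{i,a}A_{i,aq_i}^{-1}$ and $T_i(Y_{j,a})=Y_{j,a}$ for $j\neq i$; they satisfy the braid relations of $\mathfrak{g}$, and for $w\in W$ with reduced decomposition $w=s_{i_1}\cdots s_{i_k}$ one sets $T_w=T_{i_1}\cdots T_{i_k}$ (independent of the reduced decomposition). For $i\in I$, $a\in\mathbb{C}^\times$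 set $W_{i,a}=Y_{i,a}$ if $d_i=d$, $W_{i,a}=Y_{i,aq^{-1}}Y_{i,aq}$ if $d_i=d-1$, and $W_{i,a}=Y_{i,aq^{-2}}Y_{i,a}Y_{i,aq^2}$ if $d_i=d-2$. *)

theory Defs
  imports "HOL-Analysis.Analysis" "HOL-Library.Poly_Mapping"
begin

text \<open>C :: nat => nat => int is the Cartan matrix, dd i are the
 symmetrizing integers d_i. The hypothesis below is the standard intrinsic characterization
 of the Cartan matrix of a finite-dimensional simple complex Lie algebra: an indecomposable
 symmetrizable generalized Cartan matrix of finite (positive definite) type, together with the
 relatively prime positive symmetrizers d_i.\<close>

definition cartan_simple :: "nat \<Rightarrow> (nat \<Rightarrow> nat \<Rightarrow> int) \<Rightarrow> (nat \<Rightarrow> nat) \<Rightarrow> bool" where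
  "cartan_simple n C dd \<longleftrightarrow>
     n \<ge> 1
   \<and> (\<forall>i\<in>{1..n}. C i i = 2)
   \<and> (\<forall>i\<in>{1..n}. \<forall>j\<in>{1..n}. i \<noteq> j \<longrightarrow> C i j \<le> 0)
   \<and> (\<forall>i\<in>{1..n}. \<forall>j\<in>{1..n}. C i j = 0 \<longleftrightarrow> C j i = 0)
   \<and> (\<forall>i\<in>{1..n}. dd i > 0)
   \<and> (\<forall>i\<in>{1..n}. \<forall>j\<in>{1..n}. int (dd i) * C i j = int (dd j) * C j i)
   \<and> Gcd (dd ` {1..n}) = 1
   \<and> (\<forall>x :: nat \<Rightarrow> real. (\<exists>i\<in>{1..n}. x i \<noteq> 0) \<longrightarrow>
        (\<Sum>i\<in>{1..n}. \<Sum>j\<in>{1..n}. x i * real (dd i) * real_of_int (C i j) * x j) > 0)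
   \<and> (\<forall>J. J \<subseteq> {1..n} \<and> J \<noteq> {} \<and> J \<noteq> {1..n} \<longrightarrow>
        (\<exists>j\<in>J. \<exists>k\<in>{1..n} - J. C j k \<noteq> 0))"

definition lacing :: "nat \<Rightarrow> (nat \<Rightarrow> nat) \<Rightarrow> nat" where
  "lacing n dd = Max (dd ` {1..n})"

definition not_root_of_unity :: "complex \<Rightarrow> bool" where
  "not_root_of_unity q \<longleftrightarrow> q \<noteq> 0 \<and> (\<forall>k::nat. k > 0 \<longrightarrow> q ^ k \<noteq> 1)"

text \<open>Monomials are finitely supported exponent vectors (nat \<times> complex) =>0 int, and
 the Laurent polynomial ring is the group ring of this free abelian group, i.e. finitely
 supported functions from monomials to int with convolution product (Poly_Mapping).
 Only variables with i in I and a nonzero are relevant.\<close>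

type_synonym mon = "(nat \<times> complex) \<Rightarrow>\<^sub>0 int"
type_synonym Yring = "mon \<Rightarrow>\<^sub>0 int"

definition ev :: "nat \<Rightarrow> complex \<Rightarrow> mon" where
  "ev i a = Poly_Mapping.single (i, a) 1"

definition Ymon :: "mon \<Rightarrow> Yring" where
  "Ymon m = Poly_Mapping.single m 1"

definition Aexp :: "nat \<Rightarrow> (nat \<Rightarrow> nat \<Rightarrow> int) \<Rightarrow> (nat \<Rightarrow> nat) \<Rightarrow> complex \<Rightarrow> nat \<Rightarrow> complex \<Rightarrow> mon" where
  "Aexp n C dd q i b =
     ev i (b / q ^ dd i) + ev i (b * q ^ dd i)
     - ((\<Sum>j\<in>{j\<in>{1..n}. C j i = -1}. ev j b)
      + (\<Sum>j\<in>{j\<in>{1..n}. C j i = -2}. ev j (b / q) + ev j (b * q))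
      + (\<Sum>j\<in>{j\<in>{1..n}. C j i = -3}. ev j (b / q^2) + ev j b + ev j (b * q^2)))"

definition Aelt :: "nat \<Rightarrow> (nat \<Rightarrow> nat \<Rightarrow> int) \<Rightarrow> (nat \<Rightarrow> nat) \<Rightarrow> complex \<Rightarrow> nat \<Rightarrow> complex \<Rightarrow> Yring" where
  "Aelt n C dd q i b = Ymon (Aexp n C dd q i b)"

text \<open>Action of the Chari operator T_i on monomials: Y_{i,a} maps to Y_{i,a} A_{i,a q_i}^{-1},
 Y_{j,a} (j distinct from i) is fixed, extended multiplicatively.\<close>
definition Tmon :: "nat \<Rightarrow> (nat \<Rightarrow> nat \<Rightarrow> int) \<Rightarrow> (nat \<Rightarrow> nat) \<Rightarrow> complex \<Rightarrow> nat \<Rightarrow> mon \<Rightarrow> mon" where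
  "Tmon n C dd q i m =
     m - (\<Sum>a\<in>{a. Poly_Mapping.lookup m (i, a) \<noteq> 0}.
            Poly_Mapping.map (\<lambda>x. Poly_Mapping.lookup m (i, a) * x) (Aexp n C dd q i (a * q ^ dd i)))"

definition Tchari :: "nat \<Rightarrow> (nat \<Rightarrow> nat \<Rightarrow> int) \<Rightarrow> (nat \<Rightarrow> nat) \<Rightarrow> complex \<Rightarrow> nat \<Rightarrow> Yring \<Rightarrow> Yring" where
  "Tchari n C dd q i f = (\<Sum>m\<in>Poly_Mapping.keys f. Poly_Mapping.single (Tmon n C dd q i m) (Poly_Mapping.lookup f m))"

text \<open>Simple reflection s_i acting on the root lattice (coordinates w.r.t. simple roots):
 s_i(v) = v - (sum_j C_{i,j} v_j) alpha_i.\<close>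
definition sref :: "nat \<Rightarrow> (nat \<Rightarrow> nat \<Rightarrow> int) \<Rightarrow> nat \<Rightarrow> (nat \<Rightarrow> int) \<Rightarrow> (nat \<Rightarrow> int)" where
  "sref n C i v = v(i := v i - (\<Sum>j\<in>{1..n}. C i j * v j))"

definition word_elt :: "nat \<Rightarrow> (nat \<Rightarrow> nat \<Rightarrow> int) \<Rightarrow> nat list \<Rightarrow> ((nat \<Rightarrow> int) \<Rightarrow> (nat \<Rightarrow> int))" where
  "word_elt n C ws = foldr (\<lambda>i f. sref n C i \<circ> f) ws id"

definition weyl_group :: "nat \<Rightarrow> (nat \<Rightarrow> nat \<Rightarrow> int) \<Rightarrow> ((nat \<Rightarrow> int) \<Rightarrow> (nat \<Rightarrow> int)) set" where
  "weyl_group n C = {word_elt n C ws | ws. set ws \<subseteq> {1..n}}"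

definition reduced_word :: "nat \<Rightarrow> (nat \<Rightarrow> nat \<Rightarrow> int) \<Rightarrow> ((nat \<Rightarrow> int) \<Rightarrow> (nat \<Rightarrow> int)) \<Rightarrow> nat list \<Rightarrow> bool" where
  "reduced_word n C w ws \<longleftrightarrow> set ws \<subseteq> {1..n} \<and> word_elt n C ws = w \<and>
     (\<forall>vs. set vs \<subseteq> {1..n} \<and> word_elt n C vs = w \<longrightarrow> length ws \<le> length vs)"

definition Tword :: "nat \<Rightarrow> (nat \<Rightarrow> nat \<Rightarrow> int) \<Rightarrow> (nat \<Rightarrow> nat) \<Rightarrow> complex \<Rightarrow> nat list \<Rightarrow> Yring \<Rightarrow> Yring" where
  "Tword n C dd q ws = foldr (\<lambda>i f. Tchari n C dd q i \<circ> f) ws id"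

definition Tw :: "nat \<Rightarrow> (nat \<Rightarrow> nat \<Rightarrow> int) \<Rightarrow> (nat \<Rightarrow> nat) \<Rightarrow> complex \<Rightarrow> ((nat \<Rightarrow> int) \<Rightarrow> (nat \<Rightarrow> int)) \<Rightarrow> Yring \<Rightarrow> Yring" where
  "Tw n C dd q w = Tword n C dd q (SOME ws. reduced_word n C w ws)"

definition Wexp :: "nat \<Rightarrow> (nat \<Rightarrow> nat) \<Rightarrow> complex \<Rightarrow> nat \<Rightarrow> complex \<Rightarrow> mon" where
  "Wexp n dd q i a =
     (if dd i = lacing n dd then ev i a
      else if dd i + 1 = lacing n dd then ev i (a / q) + ev i (a * q)
      else ev i (a / q^2) + ev i a + ev i (a * q^2))"

inductive_set Wsubring :: "nat \<Rightarrow> (nat \<Rightarrow> nat) \<Rightarrow> complex \<Rightarrow> Yring set"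
  for n dd q where
  one: "1 \<in> Wsubring n dd q"
| gen: "i \<in> {1..n} \<Longrightarrow> a \<noteq> 0 \<Longrightarrow> Ymon (Wexp n dd q i a) \<in> Wsubring n dd q"
| geninv: "i \<in> {1..n} \<Longrightarrow> a \<noteq> 0 \<Longrightarrow> Ymon (- Wexp n dd q i a) \<in> Wsubring n dd q"
| neg: "x \<in> Wsubring n dd q \<Longrightarrow> - x \<in> Wsubring n dd q"
| add: "x \<in> Wsubring n dd q \<Longrightarrow> y \<in> Wsubring n dd q \<Longrightarrow> x + y \<in> Wsubring n dd q"
| mult: "x \<in> Wsubring n dd q \<Longrightarrow> y \<in> Wsubring n dd q \<Longrightarrow> x * y \<in> Wsubring n dd q"

end

theory Submission
  imports Defs
begin

(*
  T_i fixes Y_{j,a} for j <> i and is multiplicative, so T_i maps Z[W^{+-1}] into itself as soon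
  as every T_i(W_{j,a}) is a Laurent monomial in the W's. Only j = i matters: with t = q_i,
  T_i(W_{i,a}) is W_{i,a t^2}^{-1} times, for each neighbour j of i, the j-part of the denominators
  of the A_{i,b t}, Y_{i,b} running over the factors of W_{i,a}. These are monomials in the
  W_{j,_} exactly when the root lengths d_i, d_j are compatible in the sense of W_compatible.
  For a simple Lie algebra this compatibility follows from two facts about the Cartan matrix:
  d_i is constant along simple bonds, and there is at most one multiple bond, since a chain of
  simple bonds joining two multiple bonds makes the symmetrized Cartan form non-positive at a
  suitable vector. By connectedness of the diagram the d_i then take at most two values.
*)

section \<open>Monomials in the W_{i,a}\<close>

inductive_set W_lattice :: "nat \<Rightarrow> (nat \<Rightarrow> nat) \<Rightarrow> complex \<Rightarrow> mon set" for n dd q where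
  zero: "0 \<in> W_lattice n dd q"
| add_W: "i \<in> {1..n} \<Longrightarrow> a \<noteq> 0 \<Longrightarrow> m \<in> W_lattice n dd q \<Longrightarrow> Wexp n dd q i a + m \<in> W_lattice n dd q"
| diff_W: "i \<in> {1..n} \<Longrightarrow> a \<noteq> 0 \<Longrightarrow> m \<in> W_lattice n dd q \<Longrightarrow> m - Wexp n dd q i a \<in> W_lattice n dd q"

lemma W_lattice_add: "x \<in> W_lattice n dd q \<Longrightarrow> y \<in> W_lattice n dd q \<Longrightarrow> x + y \<in> W_lattice n dd q"
proof (induction x rule: W_lattice.induct)
  case (add_W i a m)
  then show ?case using W_lattice.add_W[of i n a "m + y"] by (simp add: add.assoc)
next
  case (diff_W i a m)
  then show ?case using W_lattice.diff_W[of i n a "m + y"] by (simp add: algebra_simps)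
qed simp

lemma W_lattice_uminus: "x \<in> W_lattice n dd q \<Longrightarrow> - x \<in> W_lattice n dd q"
proof (induction x rule: W_lattice.induct)
  case (add_W i a m)
  then show ?case using W_lattice.diff_W[of i n a "- m"] by (simp add: algebra_simps)
next
  case (diff_W i a m)
  then show ?case using W_lattice.add_W[of i n a "- m"] by (simp add: algebra_simps)
qed (simp add: W_lattice.zero)

lemma W_lattice_diff: "x \<in> W_lattice n dd q \<Longrightarrow> y \<in> W_lattice n dd q \<Longrightarrow> x - y \<in> W_lattice n dd q"
  using W_lattice_add[OF _ W_lattice_uminus, of x n dd q y] by simp

lemma Wexp_in_W_lattice: "i \<in> {1..n} \<Longrightarrow> a \<noteq> 0 \<Longrightarrow> Wexp n dd q i a \<in> W_lattice n dd q"
  using W_lattice.add_W[OF _ _ W_lattice.zero] by simp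

lemma W_lattice_sum_list: "(\<And>x. x \<in> set xs \<Longrightarrow> x \<in> W_lattice n dd q) \<Longrightarrow> sum_list xs \<in> W_lattice n dd q"
  by (induction xs) (auto intro: W_lattice_add W_lattice.zero)

lemma W_lattice_sum: "(\<And>j. j \<in> J \<Longrightarrow> g j \<in> W_lattice n dd q) \<Longrightarrow> sum g J \<in> W_lattice n dd q"
  by (induction J rule: infinite_finite_induct) (auto intro: W_lattice_add W_lattice.zero)

lemma Ymon_in_Wsubring: "m \<in> W_lattice n dd q \<Longrightarrow> Ymon m \<in> Wsubring n dd q"
proof (induction m rule: W_lattice.induct)
  case zero
  then show ?case by (simp add: Ymon_def Wsubring.one)
next
  case (add_W i a m)
  have "Ymon (Wexp n dd q i a + m) = Ymon (Wexp n dd q i a) * Ymon m"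
    by (simp add: Ymon_def mult_single)
  then show ?case using Wsubring.mult[OF Wsubring.gen[OF add_W(1,2)] add_W(4)] by simp
next
  case (diff_W i a m)
  have "Ymon (m - Wexp n dd q i a) = Ymon m * Ymon (- Wexp n dd q i a)"
    by (simp add: Ymon_def mult_single)
  then show ?case using Wsubring.mult[OF diff_W(4) Wsubring.geninv[OF diff_W(1,2)]] by simp
qed

lemma Wsubring_zero: "0 \<in> Wsubring n dd q"
  using Wsubring.add[OF Wsubring.one Wsubring.neg[OF Wsubring.one]] by simp

lemma of_int_in_Wsubring: "of_int k \<in> Wsubring n dd q"
proof (induction k rule: int_induct[where k = 0])
  case (step1 i)
  then show ?case using Wsubring.add[OF _ Wsubring.one] by simp
next
  case (step2 i)
  then show ?case using Wsubring.add[OF _ Wsubring.neg[OF Wsubring.one]] by simp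
qed (simp add: Wsubring_zero)

lemma single_in_Wsubring:
  assumes "m \<in> W_lattice n dd q"
  shows "Poly_Mapping.single m c \<in> Wsubring n dd q"
proof -
  have "Poly_Mapping.single m c = of_int c * Ymon m"
    by (simp add: Ymon_def mult_single flip: single_of_int)
  then show ?thesis using Wsubring.mult[OF of_int_in_Wsubring Ymon_in_Wsubring[OF assms]] by simp
qed

lemma Wsubring_sum: "(\<And>x. x \<in> S \<Longrightarrow> g x \<in> Wsubring n dd q) \<Longrightarrow> sum g S \<in> Wsubring n dd q"
  by (induction S rule: infinite_finite_induct) (auto intro: Wsubring_zero Wsubring.add)

lemma keys_Wsubring: "f \<in> Wsubring n dd q \<Longrightarrow> Poly_Mapping.keys f \<subseteq> W_lattice n dd q"
proof (induction f rule: Wsubring.induct)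
  case one
  then show ?case by (simp add: W_lattice.zero)
next
  case (add x y)
  then show ?case using keys_add[of x y] by blast
next
  case (mult x y)
  then show ?case using keys_mult[of x y] by (force intro: W_lattice_add)
qed (auto simp: Ymon_def Wexp_in_W_lattice W_lattice_uminus)

lemma Tchari_Wsubring:
  assumes "\<And>m. m \<in> W_lattice n dd q \<Longrightarrow> Tmon n C dd q i m \<in> W_lattice n dd q"
    and "f \<in> Wsubring n dd q"
  shows "Tchari n C dd q i f \<in> Wsubring n dd q"
  unfolding Tchari_def
  using keys_Wsubring[OF assms(2)] assms(1) by (auto intro!: Wsubring_sum single_in_Wsubring)

section \<open>Chari operators on exponent vectors\<close>

lemma finite_spectral_support: "finite {a. Poly_Mapping.lookup (m::mon) (i, a) \<noteq> 0}"
proof -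
  have "{a. Poly_Mapping.lookup m (i, a) \<noteq> 0} = Pair i -` Poly_Mapping.keys m"
    by (auto simp: in_keys_iff)
  then show ?thesis using finite_vimageI[OF finite_keys, of "Pair i" m] by (simp add: inj_on_def)
qed

lemma lookup_map_scale:
  "Poly_Mapping.lookup (Poly_Mapping.map (\<lambda>x. c * x) p) k = (c::int) * Poly_Mapping.lookup p k"
  by (auto simp: map.rep_eq when_def)

lemma lookup_Tmon:
  assumes "finite S" "{a. Poly_Mapping.lookup m (i, a) \<noteq> 0} \<subseteq> S"
  shows "Poly_Mapping.lookup (Tmon n C dd q i m) k = Poly_Mapping.lookup m k
     - (\<Sum>a\<in>S. Poly_Mapping.lookup m (i, a) * Poly_Mapping.lookup (Aexp n C dd q i (a * q ^ dd i)) k)"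
proof -
  have "(\<Sum>a | Poly_Mapping.lookup m (i, a) \<noteq> 0. Poly_Mapping.lookup m (i, a) * Poly_Mapping.lookup (Aexp n C dd q i (a * q ^ dd i)) k)
      = (\<Sum>a\<in>S. Poly_Mapping.lookup m (i, a) * Poly_Mapping.lookup (Aexp n C dd q i (a * q ^ dd i)) k)"
    by (rule sum.mono_neutral_left) (use assms in auto)
  then show ?thesis
    unfolding Tmon_def by (simp add: lookup_minus lookup_sum lookup_map_scale)
qed

lemma Tmon_zero [simp]: "Tmon n C dd q i 0 = 0"
  by (simp add: Tmon_def)

lemma Tmon_add: "Tmon n C dd q i (m1 + m2) = Tmon n C dd q i m1 + Tmon n C dd q i m2"
proof (rule poly_mapping_eqI)
  fix k
  define S where "S = {a. Poly_Mapping.lookup m1 (i, a) \<noteq> 0} \<union> {a. Poly_Mapping.lookup m2 (i, a) \<noteq> 0}"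
  have S: "finite S" "{a. Poly_Mapping.lookup m1 (i, a) \<noteq> 0} \<subseteq> S"
    "{a. Poly_Mapping.lookup m2 (i, a) \<noteq> 0} \<subseteq> S" "{a. Poly_Mapping.lookup (m1 + m2) (i, a) \<noteq> 0} \<subseteq> S"
    using finite_spectral_support by (auto simp: S_def lookup_add)
  show "Poly_Mapping.lookup (Tmon n C dd q i (m1 + m2)) k
      = Poly_Mapping.lookup (Tmon n C dd q i m1 + Tmon n C dd q i m2) k"
    by (simp add: lookup_add lookup_Tmon[OF S(1,2)] lookup_Tmon[OF S(1,3)] lookup_Tmon[OF S(1,4)]
        ring_distribs sum.distrib)
qed

lemma Tmon_uminus: "Tmon n C dd q i (- m) = - Tmon n C dd q i m"
  using Tmon_add[of n C dd q i "- m" m] by (simp add: eq_neg_iff_add_eq_0)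

lemma Tmon_diff: "Tmon n C dd q i (m1 - m2) = Tmon n C dd q i m1 - Tmon n C dd q i m2"
  using Tmon_add[of n C dd q i m1 "- m2"] Tmon_uminus[of n C dd q i m2] by simp

lemma Tmon_sum_list: "Tmon n C dd q i (sum_list xs) = sum_list (map (Tmon n C dd q i) xs)"
  by (induction xs) (auto simp: Tmon_add)

lemma Tmon_ev:
  "Tmon n C dd q i (ev j b) = (if j = i then ev i b - Aexp n C dd q i (b * q ^ dd i) else ev j b)"
proof (rule poly_mapping_eqI)
  fix k
  have "{a. Poly_Mapping.lookup (ev j b) (i, a) \<noteq> 0} \<subseteq> {b}"
    by (auto simp: ev_def lookup_single when_def)
  then show "Poly_Mapping.lookup (Tmon n C dd q i (ev j b)) k
      = Poly_Mapping.lookup (if j = i then ev i b - Aexp n C dd q i (b * q ^ dd i) else ev j b) k"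
    by (subst lookup_Tmon[of "{b}"]) (auto simp: ev_def lookup_single when_def lookup_minus)
qed

section \<open>Compatible root lengths\<close>

definition shortness :: "nat \<Rightarrow> (nat \<Rightarrow> nat) \<Rightarrow> nat \<Rightarrow> nat" where
  "shortness n dd j = (if dd j = lacing n dd then 0 else if dd j + 1 = lacing n dd then 1 else 2)"

definition W_points :: "complex \<Rightarrow> nat \<Rightarrow> complex \<Rightarrow> complex list" where
  "W_points q k a = (if k = 0 then [a] else if k = 1 then [a / q, a * q] else [a / q^2, a, a * q^2])"

lemma Wexp_eq_sum_W_points: "Wexp n dd q j a = sum_list (map (ev j) (W_points q (shortness n dd j) a))"
  by (simp add: Wexp_def shortness_def W_points_def)

lemma W_points_scale: "q \<noteq> 0 \<Longrightarrow> map (\<lambda>b. b * t) (W_points q k a) = W_points q k (a * t)"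
  by (simp add: W_points_def field_simps)

lemma W_points_nonzero: "a \<noteq> 0 \<Longrightarrow> q \<noteq> 0 \<Longrightarrow> b \<in> set (W_points q k a) \<Longrightarrow> b \<noteq> 0"
  by (auto simp: W_points_def split: if_splits)

definition A_factor :: "(nat \<Rightarrow> nat \<Rightarrow> int) \<Rightarrow> complex \<Rightarrow> nat \<Rightarrow> nat \<Rightarrow> complex \<Rightarrow> mon" where
  "A_factor C q i j c =
     (if C j i = -1 then ev j c else 0)
   + (if C j i = -2 then ev j (c / q) + ev j (c * q) else 0)
   + (if C j i = -3 then ev j (c / q^2) + ev j c + ev j (c * q^2) else 0)"

lemma Aexp_eq_sum_A_factor:
  "Aexp n C dd q i b = ev i (b / q ^ dd i) + ev i (b * q ^ dd i) - (\<Sum>j\<in>{1..n}. A_factor C q i j b)"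
  by (simp only: Aexp_def A_factor_def sum.inter_filter[OF finite_atLeastAtMost] flip: sum.distrib)

text \<open>Each neighbour j of i contributes to A_{i,b} a monomial in the variables Y_{j,_} only;
  the following condition says that these contributions, summed over the factors of W_{i,a},
  are products of W_{j,_}'s.\<close>

definition W_compatible :: "nat \<Rightarrow> (nat \<Rightarrow> nat \<Rightarrow> int) \<Rightarrow> (nat \<Rightarrow> nat) \<Rightarrow> bool" where
  "W_compatible n C dd \<longleftrightarrow> (\<forall>i\<in>{1..n}. \<forall>j\<in>{1..n}.
     (C j i = -1 \<longrightarrow> shortness n dd j = 0 \<or> shortness n dd j = shortness n dd i)
   \<and> (C j i = -2 \<longrightarrow> shortness n dd j \<le> 1)
   \<and> (C j i = -3 \<longrightarrow> shortness n dd j \<noteq> 1))"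

lemma W_compatibleD:
  assumes "W_compatible n C dd" "i \<in> {1..n}" "j \<in> {1..n}"
  shows "C j i = -1 \<Longrightarrow> shortness n dd j = 0 \<or> shortness n dd j = shortness n dd i"
    and "C j i = -2 \<Longrightarrow> shortness n dd j \<le> 1"
    and "C j i = -3 \<Longrightarrow> shortness n dd j \<noteq> 1"
  using assms unfolding W_compatible_def by blast+

lemma A_factor_in_W_lattice:
  assumes "j \<in> {1..n}" "q \<noteq> 0" "c \<noteq> 0"
    and "shortness n dd j = 0 \<or> (C j i = -2 \<and> shortness n dd j = 1)
      \<or> (C j i = -3 \<and> shortness n dd j = 2) \<or> C j i \<notin> {-1, -2, -3}"
  shows "A_factor C q i j c \<in> W_lattice n dd q"
  using assms(4)
proof (elim disjE)
  assume "shortness n dd j = 0"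
  then have "ev j x = Wexp n dd q j x" for x by (simp add: Wexp_eq_sum_W_points W_points_def)
  then show ?thesis
    using assms(1-3) unfolding A_factor_def by (auto intro!: W_lattice_add Wexp_in_W_lattice W_lattice.zero)
qed (use assms(1-3) Wexp_in_W_lattice[of j n c dd q]
     in \<open>auto simp: A_factor_def Wexp_eq_sum_W_points W_points_def add.assoc W_lattice.zero\<close>)

lemma sum_A_factor_in_W_lattice:
  assumes compat: "W_compatible n C dd" and i: "i \<in> {1..n}" and j: "j \<in> {1..n}"
    and "q \<noteq> 0" "a \<noteq> 0"
  shows "sum_list (map (A_factor C q i j) (W_points q (shortness n dd i) a)) \<in> W_lattice n dd q"
proof (cases "C j i = -1 \<and> shortness n dd j \<noteq> 0")
  case True
  with W_compatibleD(1)[OF compat i j] have "shortness n dd j = shortness n dd i" by simp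
  with True have "map (A_factor C q i j) (W_points q (shortness n dd i) a)
      = map (ev j) (W_points q (shortness n dd j) a)"
    by (simp add: A_factor_def)
  then show ?thesis using Wexp_in_W_lattice[OF j \<open>a \<noteq> 0\<close>] by (simp add: Wexp_eq_sum_W_points)
next
  case False
  have "shortness n dd j \<le> 2" by (simp add: shortness_def)
  with False W_compatibleD[OF compat i j]
  have "shortness n dd j = 0 \<or> (C j i = -2 \<and> shortness n dd j = 1)
      \<or> (C j i = -3 \<and> shortness n dd j = 2) \<or> C j i \<notin> {-1, -2, -3}"
    by auto
  then show ?thesis
    using A_factor_in_W_lattice[OF j \<open>q \<noteq> 0\<close>] W_points_nonzero[OF \<open>a \<noteq> 0\<close> \<open>q \<noteq> 0\<close>]
    by (auto intro!: W_lattice_sum_list)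
qed

lemma sum_list_sum_swap: "sum_list (map (\<lambda>b. \<Sum>j\<in>J. g j b) xs) = (\<Sum>j\<in>J. sum_list (map (g j) xs))"
  by (induction xs) (auto simp: sum.distrib)

lemma Tmon_Wexp_in_W_lattice:
  assumes compat: "W_compatible n C dd" and i: "i \<in> {1..n}" and j: "j \<in> {1..n}"
    and q: "q \<noteq> 0" and a: "a \<noteq> 0"
  shows "Tmon n C dd q i (Wexp n dd q j a) \<in> W_lattice n dd q"
proof (cases "j = i")
  case False
  then have "Tmon n C dd q i (Wexp n dd q j a) = Wexp n dd q j a"
    unfolding Wexp_eq_sum_W_points Tmon_sum_list by (simp add: Tmon_ev comp_def)
  then show ?thesis using Wexp_in_W_lattice[OF j a] by simp
next
  case True
  define t where "t = q ^ dd i"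
  have t: "t \<noteq> 0" using q by (simp add: t_def)
  define bs where "bs = W_points q (shortness n dd i) a"
  have "Tmon n C dd q i (Wexp n dd q j a) = sum_list (map (\<lambda>b. ev i b - Aexp n C dd q i (b * t)) bs)"
    unfolding Wexp_eq_sum_W_points Tmon_sum_list using True by (simp add: Tmon_ev comp_def t_def bs_def)
  also have "\<dots> = sum_list (map (\<lambda>b. (\<Sum>j\<in>{1..n}. A_factor C q i j (b * t)) - ev i (b * (t * t))) bs)"
    unfolding Aexp_eq_sum_A_factor t_def[symmetric] using t
    by (intro arg_cong[where f = sum_list] map_cong refl) (simp add: field_simps)
  also have "\<dots> = (\<Sum>j\<in>{1..n}. sum_list (map (A_factor C q i j) (W_points q (shortness n dd i) (a * t))))
      - Wexp n dd q i (a * (t * t))"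
    unfolding sum_list_subtractf sum_list_sum_swap Wexp_eq_sum_W_points
    by (simp add: bs_def W_points_scale[OF q, symmetric] comp_def)
  finally show ?thesis
    using sum_A_factor_in_W_lattice[OF compat i _ q] Wexp_in_W_lattice[OF i] a t
    by (auto intro!: W_lattice_diff W_lattice_sum)
qed

lemma Tmon_W_lattice:
  assumes "W_compatible n C dd" "i \<in> {1..n}" "q \<noteq> 0" "m \<in> W_lattice n dd q"
  shows "Tmon n C dd q i m \<in> W_lattice n dd q"
  using assms(4)
proof induction
  case (add_W j a m)
  then show ?case
    using Tmon_Wexp_in_W_lattice[OF assms(1,2) _ assms(3)] by (simp add: Tmon_add W_lattice_add)
next
  case (diff_W j a m)
  then show ?case
    using Tmon_Wexp_in_W_lattice[OF assms(1,2) _ assms(3)] by (simp add: Tmon_diff W_lattice_diff)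
qed (simp add: W_lattice.zero)

lemma Tword_Wsubring:
  assumes "W_compatible n C dd" "q \<noteq> 0" "set ws \<subseteq> {1..n}" "f \<in> Wsubring n dd q"
  shows "Tword n C dd q ws f \<in> Wsubring n dd q"
  using assms(3)
  by (induction ws)
    (auto simp: Tword_def assms(4) intro!: Tchari_Wsubring Tmon_W_lattice[OF assms(1) _ assms(2)])

lemma reduced_word_exists:
  assumes "w \<in> weyl_group n C"
  shows "\<exists>ws. reduced_word n C w ws"
proof -
  obtain vs where "set vs \<subseteq> {1..n} \<and> word_elt n C vs = w"
    using assms unfolding weyl_group_def by blast
  from ex_has_least_nat[of "\<lambda>us. set us \<subseteq> {1..n} \<and> word_elt n C us = w", OF this, of length]
  show ?thesis unfolding reduced_word_def by blast
qed

lemma Tw_Wsubring: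
  assumes "W_compatible n C dd" "q \<noteq> 0" "w \<in> weyl_group n C" "f \<in> Wsubring n dd q"
  shows "Tw n C dd q w f \<in> Wsubring n dd q"
proof -
  have "reduced_word n C w (SOME ws. reduced_word n C w ws)"
    using someI_ex[OF reduced_word_exists[OF assms(3)]] .
  then show ?thesis
    unfolding Tw_def reduced_word_def using Tword_Wsubring[OF assms(1,2) _ assms(4)] by blast
qed

section \<open>Multiple bonds of a Cartan matrix of finite type\<close>

lemma quadratic_form_chain_bound:
  fixes B :: "nat \<Rightarrow> nat \<Rightarrow> real" and y :: "nat \<Rightarrow> real"
  assumes sym: "\<And>k. k < m \<Longrightarrow> B (Suc k) k = B k (Suc k)"
    and far: "\<And>k l. k \<le> m \<Longrightarrow> l \<le> m \<Longrightarrow> l \<noteq> k \<Longrightarrow> l \<noteq> Suc k \<Longrightarrow> k \<noteq> Suc l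
      \<Longrightarrow> B k l \<le> 0"
    and nonneg: "\<And>k. y k \<ge> 0"
  shows "(\<Sum>k\<le>m. \<Sum>l\<le>m. y k * B k l * y l)
    \<le> y 0 * B 0 0 * y 0
      + (\<Sum>k<m. y (Suc k) * B (Suc k) (Suc k) * y (Suc k) + 2 * (y k * B k (Suc k) * y (Suc k)))"
proof -
  define F where "F k l = y k * B k l * y l" for k l
  define G where "G k l = (if l = k then F k k else 0) + (if l = Suc k then F k l else 0)
    + (if k = Suc l then F k l else 0)" for k l
  have "F k l \<le> G k l" if "k \<le> m" "l \<le> m" for k l
  proof (cases "l = k \<or> l = Suc k \<or> k = Suc l")
    case False
    then have "B k l \<le> 0" using far that by blast
    then show ?thesis
      using False nonneg[of k] nonneg[of l]
      by (simp add: F_def G_def mult_nonneg_nonpos mult_nonpos_nonneg)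
  qed (auto simp: G_def)
  then have "(\<Sum>k\<le>m. \<Sum>l\<le>m. F k l) \<le> (\<Sum>k\<le>m. \<Sum>l\<le>m. G k l)"
    by (intro sum_mono) auto
  also have "\<dots> = (\<Sum>k\<le>m. F k k) + (\<Sum>k<m. F k (Suc k)) + (\<Sum>k<m. F (Suc k) k)"
  proof -
    have below: "{..m} \<inter> {k. Suc k \<le> m} = {..<m}" by auto
    have "(\<Sum>k\<le>m. \<Sum>l\<le>m. if k = Suc l then F k l else 0) = (\<Sum>l\<le>m. \<Sum>k\<le>m. if k = Suc l then F k l else 0)"
      by (rule sum.swap)
    then show ?thesis by (simp add: G_def sum.distrib sum.If_cases below)
  qed
  also have "(\<Sum>k<m. F (Suc k) k) = (\<Sum>k<m. F k (Suc k))"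
    by (intro sum.cong) (auto simp: F_def sym)
  also have "(\<Sum>k\<le>m. F k k) + (\<Sum>k<m. F k (Suc k)) + (\<Sum>k<m. F k (Suc k))
      = F 0 0 + (\<Sum>k<m. F (Suc k) (Suc k) + 2 * F k (Suc k))"
    by (simp add: sum.atMost_shift sum.distrib sum_distrib_left)
  finally show ?thesis by (simp add: F_def)
qed

lemma negative_int_product_lt_2:
  fixes a b :: int
  assumes "a \<le> -1" "b \<le> -1" "a * b < 2"
  shows "a = -1 \<and> b = -1"
proof -
  have "(-a) * 1 \<le> (-a) * (-b)" "1 * (-b) \<le> (-a) * (-b)"
    using assms by (intro mult_left_mono mult_right_mono; simp)+
  with assms show ?thesis by simp
qed

definition walk ::
    "('a \<Rightarrow> 'a \<Rightarrow> bool) \<Rightarrow> 'a set \<Rightarrow> 'a set \<Rightarrow> (nat \<Rightarrow> 'a) \<Rightarrow> nat \<Rightarrow> bool" where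
  "walk R J0 J1 p m \<longleftrightarrow> p 0 \<in> J0 \<and> p m \<in> J1 \<and> (\<forall>k<m. R (p k) (p (Suc k)))"

definition shortest_walk ::
    "('a \<Rightarrow> 'a \<Rightarrow> bool) \<Rightarrow> 'a set \<Rightarrow> 'a set \<Rightarrow> (nat \<Rightarrow> 'a) \<Rightarrow> nat \<Rightarrow> bool" where
  "shortest_walk R J0 J1 p m \<longleftrightarrow> walk R J0 J1 p m \<and> (\<forall>p' m'. walk R J0 J1 p' m' \<longrightarrow> m \<le> m')"

lemma shortest_walk_exists:
  assumes "walk R J0 J1 p m"
  shows "\<exists>p m. shortest_walk R J0 J1 p m"
proof -
  obtain m where "\<exists>p. walk R J0 J1 p m" and "\<And>m'. (\<exists>p. walk R J0 J1 p m') \<Longrightarrow> m \<le> m'"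
    using ex_has_least_nat[of "\<lambda>k. \<exists>p. walk R J0 J1 p k" m id] assms by auto
  then show ?thesis unfolding shortest_walk_def by blast
qed

lemma shortest_walk_avoids_target:
  assumes "shortest_walk R J0 J1 p m" "k < m"
  shows "p k \<notin> J1"
proof
  assume "p k \<in> J1"
  with assms have "walk R J0 J1 p k" by (auto simp: shortest_walk_def walk_def)
  with assms show False by (force simp: shortest_walk_def)
qed

lemma shortest_walk_avoids_source:
  assumes "shortest_walk R J0 J1 p m" "0 < k" "k \<le> m"
  shows "p k \<notin> J0"
proof
  assume "p k \<in> J0"
  with assms have "walk R J0 J1 (\<lambda>t. p (t + k)) (m - k)"
    by (auto simp: shortest_walk_def walk_def)
  with assms show False by (force simp: shortest_walk_def)
qed

lemma shortest_walk_inj: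
  assumes shortest: "shortest_walk R J0 J1 p m"
  shows "inj_on p {..m}"
proof (rule ccontr)
  assume "\<not> inj_on p {..m}"
  then obtain a b where ab: "a < b" "b \<le> m" "p a = p b"
    unfolding inj_on_def by (metis atMost_iff linorder_neqE_nat)
  have walk: "walk R J0 J1 p m" and min: "\<And>p' m'. walk R J0 J1 p' m' \<Longrightarrow> m \<le> m'"
    using shortest unfolding shortest_walk_def by auto
  define p' where "p' t = (if t \<le> a then p t else p (t + (b - a)))" for t
  have "p' (m - (b - a)) = p m"
  proof (cases "m - (b - a) \<le> a")
    case True
    then have "m = b" using ab by linarith
    then show ?thesis using ab by (simp add: p'_def)
  qed (use ab in \<open>simp add: p'_def\<close>)
  moreover have "R (p' t) (p' (Suc t))" if "t < m - (b - a)" for t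
  proof -
    consider "t < a" | "t = a" | "a < t" by linarith
    then show ?thesis
    proof cases
      case 3
      then show ?thesis using walk that by (auto simp: walk_def p'_def)
    qed (use walk that ab in \<open>auto simp: walk_def p'_def\<close>)
  qed
  ultimately have "walk R J0 J1 p' (m - (b - a))"
    using walk by (auto simp: walk_def p'_def)
  with min ab show False by force
qed

lemma inj_on_extend_both_ends:
  assumes inj: "inj_on p {..m}" and u: "u \<notin> p ` {..m}" and z: "z \<notin> p ` {..m}" and "u \<noteq> z"
  shows "inj_on (\<lambda>t. if t = 0 then u else if t \<le> Suc m then p (t - 1) else z) {..Suc (Suc m)}"
    (is "inj_on ?r _")
proof -
  have shift: "(\<lambda>t. t - 1) ` {1..Suc m} = {..m}"
    by (auto simp: image_iff intro!: bexI[of _ "Suc _"])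
  have "inj_on (\<lambda>t. t - 1) {1..Suc m}"
    by (rule inj_onI) auto
  then have "inj_on (p \<circ> (\<lambda>t. t - 1)) {1..Suc m}"
    by (rule comp_inj_on) (simp only: shift inj)
  then have "inj_on ?r {1..Suc m}"
    by (rule inj_on_cong[THEN iffD1, rotated]) auto
  moreover have "?r ` {1..Suc m} = p ` {..m}"
    by (auto simp: shift[symmetric] image_image intro!: image_cong)
  moreover have "{..Suc (Suc m)} = insert 0 (insert (Suc (Suc m)) {1..Suc m})"
    by auto
  ultimately show ?thesis using u z \<open>u \<noteq> z\<close> by auto
qed

lemma symmetrizer_le_lacing: "i \<in> {1..n} \<Longrightarrow> dd i \<le> lacing n dd"
  by (simp add: lacing_def)

lemma lacing_attained:
  assumes "1 \<le> n"
  shows "\<exists>i\<in>{1..n}. dd i = lacing n dd"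
proof -
  have "Max (dd ` {1..n}) \<in> dd ` {1..n}"
    using assms by (intro Max_in) auto
  then show ?thesis by (auto simp: lacing_def)
qed

locale simple_cartan =
  fixes n :: nat and C :: "nat \<Rightarrow> nat \<Rightarrow> int" and dd :: "nat \<Rightarrow> nat"
  assumes cartan_simple: "cartan_simple n C dd"
begin

lemma cartan_diag: "i \<in> {1..n} \<Longrightarrow> C i i = 2"
  using cartan_simple by (simp add: cartan_simple_def)

lemma cartan_offdiag_nonpos: "i \<in> {1..n} \<Longrightarrow> j \<in> {1..n} \<Longrightarrow> i \<noteq> j \<Longrightarrow> C i j \<le> 0"
  using cartan_simple by (simp add: cartan_simple_def)

lemma cartan_zero_iff: "i \<in> {1..n} \<Longrightarrow> j \<in> {1..n} \<Longrightarrow> C i j = 0 \<longleftrightarrow> C j i = 0"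
  using cartan_simple by (simp add: cartan_simple_def)

lemma symmetrizer_pos: "i \<in> {1..n} \<Longrightarrow> dd i > 0"
  using cartan_simple by (simp add: cartan_simple_def)

lemma cartan_symmetrized: "i \<in> {1..n} \<Longrightarrow> j \<in> {1..n} \<Longrightarrow> int (dd i) * C i j = int (dd j) * C j i"
  using cartan_simple by (simp add: cartan_simple_def)

lemma Gcd_symmetrizers: "Gcd (dd ` {1..n}) = 1"
  using cartan_simple by (simp add: cartan_simple_def)

lemma cartan_form_pos:
  "(\<exists>i\<in>{1..n}. x i \<noteq> 0) \<Longrightarrow> (\<Sum>i\<in>{1..n}. \<Sum>j\<in>{1..n}. x i * real (dd i) * real_of_int (C i j) * x j) > 0"
  using cartan_simple by (simp add: cartan_simple_def)

lemma cartan_connected: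
  "J \<subseteq> {1..n} \<Longrightarrow> J \<noteq> {} \<Longrightarrow> J \<noteq> {1..n} \<Longrightarrow> \<exists>j\<in>J. \<exists>k\<in>{1..n} - J. C j k \<noteq> 0"
  using cartan_simple by (simp add: cartan_simple_def)

lemma cartan_symmetrized_real:
  "i \<in> {1..n} \<Longrightarrow> j \<in> {1..n} \<Longrightarrow> real (dd i) * real_of_int (C i j) = real (dd j) * real_of_int (C j i)"
  using cartan_symmetrized[of i j] by (metis of_int_mult of_int_of_nat_eq)

lemma cartan_form_pos_on_path:
  assumes inj: "inj_on p {..m}" and p: "p ` {..m} \<subseteq> {1..n}" and "j \<le> m" "y j \<noteq> 0"
  shows "(\<Sum>k\<le>m. \<Sum>l\<le>m. y k * real (dd (p k)) * real_of_int (C (p k) (p l)) * y l) > 0"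
proof -
  define x where "x v = (if v \<in> p ` {..m} then y (the_inv_into {..m} p v) else 0)" for v
  have x_p: "x (p k) = y k" if "k \<le> m" for k
    using the_inv_into_f_f[OF inj] that by (simp add: x_def)
  have "(\<Sum>i\<in>{1..n}. \<Sum>j\<in>{1..n}. x i * real (dd i) * real_of_int (C i j) * x j)
      = (\<Sum>i\<in>{1..n}. \<Sum>j\<in>p ` {..m}. x i * real (dd i) * real_of_int (C i j) * x j)"
    using p by (intro sum.cong refl sum.mono_neutral_right) (auto simp: x_def)
  also have "\<dots> = (\<Sum>i\<in>p ` {..m}. \<Sum>j\<in>p ` {..m}. x i * real (dd i) * real_of_int (C i j) * x j)"
    using p by (intro sum.mono_neutral_right) (auto simp: x_def)
  also have "\<dots> = (\<Sum>k\<le>m. \<Sum>l\<le>m. y k * real (dd (p k)) * real_of_int (C (p k) (p l)) * y l)"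
    by (simp add: sum.reindex[OF inj] x_p)
  finally show ?thesis
    using cartan_form_pos[of x] assms(3,4) p x_p by force
qed

lemma cartan_product_le_3:
  assumes i: "i \<in> {1..n}" and j: "j \<in> {1..n}" and "i \<noteq> j"
  shows "C i j * C j i \<le> 3"
proof -
  define p where "p k = (if k = 0 then i else j)" for k :: nat
  define y where "y k = (if k = 0 then - real_of_int (C i j) else 2)" for k :: nat
  have "inj_on p {..1}" "p ` {..1} \<subseteq> {1..n}"
    using assms by (auto simp: p_def inj_on_def)
  from cartan_form_pos_on_path[OF this, of 1 y]
  have "0 < real (dd j) * (8 - 2 * real_of_int (C i j * C j i))"
    using cartan_diag[OF i] cartan_diag[OF j] cartan_symmetrized_real[OF i j]
    by (simp add: p_def y_def algebra_simps)
  then have "real_of_int (C i j * C j i) < 4"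
    using symmetrizer_pos[OF j] by (simp add: zero_less_mult_iff)
  then show ?thesis by linarith
qed

lemma multiple_bond_weight:
  assumes i: "i \<in> {1..n}" and j: "j \<in> {1..n}" and "2 \<le> C i j * C j i"
  shows "2 * real (dd j) \<le> real (dd i) * (real_of_int (C i j))\<^sup>2"
proof -
  have "real (dd i) * (real_of_int (C i j))\<^sup>2 = real (dd j) * real_of_int (C i j * C j i)"
    using cartan_symmetrized_real[OF i j] by (simp add: power2_eq_square algebra_simps)
  moreover have "2 * real (dd j) \<le> real_of_int (C i j * C j i) * real (dd j)"
    using assms(3) by (intro mult_right_mono) linarith+
  ultimately show ?thesis by (simp add: mult.commute)
qed

lemma same_symmetrizer_if_simple:
  "i \<in> {1..n} \<Longrightarrow> j \<in> {1..n} \<Longrightarrow> C i j = -1 \<Longrightarrow> C j i = -1 \<Longrightarrow> dd i = dd j"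
  using cartan_symmetrized[of i j] by simp

lemma symmetrizer_constant_on_simple_chain:
  assumes p: "p ` {..m} \<subseteq> {1..n}"
    and simple: "\<And>k. 1 \<le> k \<Longrightarrow> k + 2 \<le> m \<Longrightarrow> C (p k) (p (Suc k)) = -1 \<and> C (p (Suc k)) (p k) = -1"
    and "1 \<le> k" "k < m"
  shows "dd (p k) = dd (p 1)"
  using assms(3,4)
proof (induction k)
  case (Suc k)
  have "p k \<in> {1..n}" "p (Suc k) \<in> {1..n}"
    using p Suc.prems unfolding image_subset_iff by simp_all
  with Suc show ?case
    using same_symmetrizer_if_simple[of "p k" "p (Suc k)"] simple[of k] by (cases "k = 0") auto
qed simp

text \<open>The form is evaluated at the vector (-C_{p0,p1}/2, 1, ..., 1, -C_{pm,pm-1}/2) along the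
  chain; the end weights minimise it in the end coordinates, which makes it non-positive.\<close>

lemma no_simple_chain_between_multiple_bonds:
  assumes m: "2 \<le> m" and inj: "inj_on p {..m}" and p: "p ` {..m} \<subseteq> {1..n}"
    and simple: "\<And>k. 1 \<le> k \<Longrightarrow> k + 2 \<le> m \<Longrightarrow> C (p k) (p (Suc k)) = -1 \<and> C (p (Suc k)) (p k) = -1"
    and first: "2 \<le> C (p 0) (p 1) * C (p 1) (p 0)"
    and last: "2 \<le> C (p (m - 1)) (p m) * C (p m) (p (m - 1))"
  shows False
proof -
  obtain m' where m': "m = Suc m'" "1 \<le> m'" using m by (cases m) auto
  have pI: "p k \<in> {1..n}" if "k \<le> m" for k using p that by blast
  have interior: "dd (p k) = dd (p 1)" if "1 \<le> k" "k \<le> m'" for k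
    using symmetrizer_constant_on_simple_chain[OF p simple that(1)] that(2) m' by simp
  have p_distinct: "p k \<noteq> p l" if "k \<le> m" "l \<le> m" "k \<noteq> l" for k l
    using inj that by (auto dest: inj_onD)
  define B where "B k l = real (dd (p k)) * real_of_int (C (p k) (p l))" for k l
  define c0 where "c0 = real_of_int (C (p 0) (p 1))"
  define cm where "cm = real_of_int (C (p m) (p m'))"
  define y where "y k = (if k = 0 then - c0 / 2 else if k = m then - cm / 2 else 1)" for k
  have "c0 \<le> 0" "cm \<le> 0"
    using cartan_offdiag_nonpos[OF pI pI p_distinct] m' by (auto simp: c0_def cm_def)
  then have y_nonneg: "y k \<ge> 0" for k by (simp add: y_def)
  define h where "h k = y (Suc k) * B (Suc k) (Suc k) * y (Suc k) + 2 * (y k * B k (Suc k) * y (Suc k))" for k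
  have "(\<Sum>k\<le>m. \<Sum>l\<le>m. y k * B k l * y l) \<le> y 0 * B 0 0 * y 0 + (\<Sum>k<m. h k)"
    unfolding h_def
  proof (rule quadratic_form_chain_bound[OF _ _ y_nonneg])
    show "B (Suc k) k = B k (Suc k)" if "k < m" for k
      using cartan_symmetrized_real[OF pI pI] that by (simp add: B_def)
    show "B k l \<le> 0" if "k \<le> m" "l \<le> m" "l \<noteq> k" for k l
      using cartan_offdiag_nonpos[OF pI pI p_distinct] that by (simp add: B_def mult_nonneg_nonpos)
  qed
  also have "(\<Sum>k<m. h k) = h 0 + h m'"
  proof -
    have "h k = 0" if "1 \<le> k" "k < m'" for k
      using that m' interior[of k] interior[of "Suc k"] simple[of k] cartan_diag[OF pI[of "Suc k"]]
      by (simp add: h_def B_def y_def)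
    then have "(\<Sum>k<m. h k) = (\<Sum>k\<in>{0, m'}. h k)"
      using m' by (intro sum.mono_neutral_right) auto
    then show ?thesis using m' by simp
  qed
  also have "y 0 * B 0 0 * y 0 + (h 0 + h m')
      = 2 * real (dd (p 1)) - (real (dd (p 0)) * c0\<^sup>2 + real (dd (p m)) * cm\<^sup>2) / 2"
  proof -
    have "B m' m = real (dd (p m)) * cm"
      using cartan_symmetrized_real[OF pI pI, of m' m] m' by (simp add: B_def cm_def)
    then show ?thesis
      using m' cartan_diag[OF pI[of 0]] cartan_diag[OF pI[of 1]] cartan_diag[OF pI[of m]]
      by (simp add: h_def B_def y_def c0_def power2_eq_square algebra_simps)
  qed
  also have "\<dots> \<le> 0"
    using multiple_bond_weight[OF pI pI first] multiple_bond_weight[OF pI pI, of m m'] last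
      interior[of m'] m'
    by (simp add: c0_def cm_def mult.commute)
  finally have "(\<Sum>k\<le>m. \<Sum>l\<le>m. y k * B k l * y l) \<le> 0" .
  moreover have "y 1 \<noteq> 0" using m' by (simp add: y_def)
  then have "(\<Sum>k\<le>m. \<Sum>l\<le>m. y k * B k l * y l) > 0"
    using cartan_form_pos_on_path[OF inj p, of 1 y] m' by (simp add: B_def mult.assoc)
  ultimately show False by linarith
qed

definition bond :: "nat \<Rightarrow> nat \<Rightarrow> bool" where
  "bond a b \<longleftrightarrow> a \<in> {1..n} \<and> b \<in> {1..n} \<and> a \<noteq> b \<and> C a b \<noteq> 0"

definition multiple_bond :: "nat \<Rightarrow> nat \<Rightarrow> bool" where
  "multiple_bond a b \<longleftrightarrow> bond a b \<and> 2 \<le> C a b * C b a"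

lemma bond_sym: "bond a b \<Longrightarrow> bond b a"
  unfolding bond_def using cartan_zero_iff by blast

lemma multiple_bond_sym: "multiple_bond a b \<Longrightarrow> multiple_bond b a"
  unfolding multiple_bond_def using bond_sym by (simp add: mult.commute)

lemma simple_bond_entries:
  assumes "bond a b" "\<not> multiple_bond a b"
  shows "C a b = -1 \<and> C b a = -1"
proof -
  have "C a b \<le> 0" "C b a \<le> 0" "C a b \<noteq> 0" "C b a \<noteq> 0"
    using assms(1) cartan_offdiag_nonpos cartan_zero_iff unfolding bond_def by auto
  moreover have "C a b * C b a < 2"
    using assms unfolding multiple_bond_def by simp
  ultimately show ?thesis
    using negative_int_product_lt_2[of "C a b" "C b a"] by linarith
qed

definition multiple_bond_chain :: "(nat \<Rightarrow> nat) \<Rightarrow> nat \<Rightarrow> bool" where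
  "multiple_bond_chain p m \<longleftrightarrow> 2 \<le> m \<and> inj_on p {..m} \<and> (\<forall>k<m. bond (p k) (p (Suc k)))
     \<and> multiple_bond (p 0) (p 1) \<and> multiple_bond (p (m - 1)) (p m)"

text \<open>An inner multiple bond would cut off a shorter chain, so a shortest chain has only
  simple bonds inside.\<close>

lemma no_multiple_bond_chain: "\<not> multiple_bond_chain p m"
proof (induction m rule: less_induct)
  case (less m)
  show ?case
  proof
    assume chain: "multiple_bond_chain p m"
    then have m: "2 \<le> m" and bonds: "\<And>k. k < m \<Longrightarrow> bond (p k) (p (Suc k))"
      by (auto simp: multiple_bond_chain_def)
    show False
    proof (cases "\<exists>k. 1 \<le> k \<and> k + 2 \<le> m \<and> multiple_bond (p k) (p (Suc k))")
      case True
      then obtain k where k: "1 \<le> k" "k + 2 \<le> m" "multiple_bond (p k) (p (Suc k))"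
        by blast
      with chain have "multiple_bond_chain p (Suc k)"
        by (auto simp: multiple_bond_chain_def elim: inj_on_subset)
      with less.IH k show False by fastforce
    next
      case False
      have "p k \<in> {1..n}" if "k \<le> m" for k
      proof (cases "k < m")
        case True
        then show ?thesis using bonds[of k] by (simp add: bond_def)
      next
        case False
        then have "k = Suc (m - 1)" using that m by simp
        then show ?thesis using bonds[of "m - 1"] m by (simp add: bond_def)
      qed
      with chain False show False
        by (intro no_simple_chain_between_multiple_bonds[of m p])
          (auto simp: multiple_bond_chain_def multiple_bond_def intro!: simple_bond_entries bonds)
    qed
  qed
qed

lemma walk_exists:
  assumes "J0 \<subseteq> {1..n}" "J0 \<noteq> {}" "x \<in> {1..n}"
  shows "\<exists>p m. walk bond J0 {x} p m"
proof -
  define R where "R = {y\<in>{1..n}. \<exists>p m. walk bond J0 {y} p m}"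
  have "J0 \<subseteq> R"
  proof
    fix y assume "y \<in> J0"
    then have "walk bond J0 {y} (\<lambda>_. y) 0" by (simp add: walk_def)
    with \<open>y \<in> J0\<close> assms(1) show "y \<in> R" unfolding R_def by blast
  qed
  have "R = {1..n}"
  proof (rule ccontr)
    assume "R \<noteq> {1..n}"
    moreover have "R \<subseteq> {1..n}" "R \<noteq> {}" using \<open>J0 \<subseteq> R\<close> assms(2) by (auto simp: R_def)
    ultimately obtain j k where j: "j \<in> R" and k: "k \<in> {1..n} - R" and "C j k \<noteq> 0"
      using cartan_connected by blast
    then have "bond j k" by (auto simp: bond_def R_def)
    obtain p m where "walk bond J0 {j} p m" using j by (auto simp: R_def)
    then have "walk bond J0 {k} (\<lambda>t. if t \<le> m then p t else k) (Suc m)"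
      using \<open>bond j k\<close> by (auto simp: walk_def less_Suc_eq)
    with k show False by (auto simp: R_def)
  qed
  with assms(3) show ?thesis unfolding R_def by blast
qed

lemma no_path_between_multiple_bonds:
  assumes inj: "inj_on p {..m}" and u: "multiple_bond u (p 0)" and z: "multiple_bond (p m) z"
    and path: "\<And>k. k < m \<Longrightarrow> bond (p k) (p (Suc k))"
    and "u \<notin> p ` {..m}" "z \<notin> p ` {..m}" "u \<noteq> z"
  shows False
proof -
  define r where "r t = (if t = 0 then u else if t \<le> Suc m then p (t - 1) else z)" for t
  have "bond (r k) (r (Suc k))" if k: "k < Suc (Suc m)" for k
  proof -
    consider "k = 0" | "0 < k" "k \<le> m" | "k = Suc m" using k by linarith
    then show ?thesis
    proof cases
      case 2
      then have "bond (p (k - 1)) (p (Suc (k - 1)))" using path[of "k - 1"] by simp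
      with 2 show ?thesis by (simp add: r_def)
    qed (use u z in \<open>auto simp: r_def multiple_bond_def\<close>)
  qed
  moreover have "inj_on r {..Suc (Suc m)}"
    unfolding r_def using inj_on_extend_both_ends[OF inj] assms(5-7) .
  ultimately have "multiple_bond_chain r (Suc (Suc m))"
    using u z by (simp add: multiple_bond_chain_def r_def)
  then show False using no_multiple_bond_chain by blast
qed

lemma multiple_bond_unique:
  assumes uv: "multiple_bond u v" and yz: "multiple_bond y z"
  shows "{u, v} = {y, z}"
proof (rule ccontr)
  assume ne: "{u, v} \<noteq> {y, z}"
  have "{u, v} \<subseteq> {1..n}" "y \<in> {1..n}"
    using uv yz by (auto simp: multiple_bond_def bond_def)
  then obtain p0 m0 where "walk bond {u, v} {y} p0 m0"
    using walk_exists by blast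
  then have "walk bond {u, v} {y, z} p0 m0" by (auto simp: walk_def)
  then obtain p m where shortest: "shortest_walk bond {u, v} {y, z} p m"
    using shortest_walk_exists by blast
  then have walk: "walk bond {u, v} {y, z} p m" by (simp add: shortest_walk_def)
  define u' where "u' = (if p 0 = u then v else u)"
  define z' where "z' = (if p m = y then z else y)"
  have u': "multiple_bond u' (p 0)" "{u, v} = {p 0, u'}" "u' \<noteq> p 0"
    using walk uv multiple_bond_sym[OF uv] by (auto simp: walk_def u'_def multiple_bond_def bond_def)
  have z': "multiple_bond (p m) z'" "{y, z} = {p m, z'}" "z' \<noteq> p m"
    using walk yz multiple_bond_sym[OF yz] by (auto simp: walk_def z'_def multiple_bond_def bond_def)
  have "u' \<notin> p ` {..m}"
  proof
    assume "u' \<in> p ` {..m}"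
    then obtain k where "k \<le> m" "p k = u'" by auto
    with shortest_walk_avoids_source[OF shortest, of k] u' show False by (cases "k = 0") auto
  qed
  moreover have "z' \<notin> p ` {..m}"
  proof
    assume "z' \<in> p ` {..m}"
    then obtain k where "k \<le> m" "p k = z'" by auto
    with shortest_walk_avoids_target[OF shortest, of k] z' show False by (cases "k = m") auto
  qed
  moreover have "u' \<noteq> z'"
  proof
    assume "u' = z'"
    then have "walk bond {u, v} {y, z} (\<lambda>_. u') 0" using u' z' by (simp add: walk_def)
    then have "m = 0" using shortest by (force simp: shortest_walk_def)
    then show False using ne u' z' \<open>u' = z'\<close> by simp
  qed
  ultimately show False
    using no_path_between_multiple_bonds[OF shortest_walk_inj[OF shortest] u'(1) z'(1)] walk
    by (simp add: walk_def)
qed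

lemma symmetrizer_values:
  assumes uv: "multiple_bond u v" and x: "x \<in> {1..n}"
  shows "dd x = dd u \<or> dd x = dd v"
proof -
  define J where "J = {w\<in>{1..n}. dd w = dd u \<or> dd w = dd v}"
  have "J = {1..n}"
  proof (rule ccontr)
    assume "J \<noteq> {1..n}"
    moreover have "J \<subseteq> {1..n}" "u \<in> J"
      using uv by (auto simp: J_def multiple_bond_def bond_def)
    ultimately obtain j k where j: "j \<in> J" and k: "k \<in> {1..n}" "k \<notin> J" and "C j k \<noteq> 0"
      using cartan_connected[of J] by blast
    then have jk: "bond j k" unfolding bond_def J_def by blast
    have "dd k = dd j \<or> k \<in> {u, v}"
    proof (cases "multiple_bond j k")
      case True
      then show ?thesis using multiple_bond_unique[OF uv True] by simp
    next
      case False
      then show ?thesis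
        using simple_bond_entries[OF jk False] same_symmetrizer_if_simple[of j k] jk
        unfolding bond_def by simp
    qed
    with j k show False unfolding J_def by auto
  qed
  with x show ?thesis unfolding J_def by blast
qed

lemma symmetrizer_le_if_multiple_bond:
  assumes "multiple_bond u v" "dd u \<le> dd v" "x \<in> {1..n}"
  shows "dd x \<le> dd v"
  using symmetrizer_values[OF assms(1,3)] assms(2) by auto

lemma cartan_entry_opposite_multiple:
  assumes i: "i \<in> {1..n}" and j: "j \<in> {1..n}" and "C j i \<le> -2"
  shows "C i j = -1"
proof -
  have "i \<noteq> j" using assms cartan_diag by fastforce
  then have "C i j \<le> 0" "C i j \<noteq> 0" "C i j * C j i \<le> 3"
    using cartan_offdiag_nonpos[OF i j] cartan_zero_iff[OF i j] cartan_product_le_3[OF i j] assms(3)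
    by auto
  moreover have "\<not> C i j \<le> -2"
  proof
    assume "C i j \<le> -2"
    then have "2 * 2 \<le> (- C i j) * (- C j i)"
      using assms(3) by (intro mult_mono) auto
    with \<open>C i j * C j i \<le> 3\<close> show False by simp
  qed
  ultimately show ?thesis by linarith
qed

lemma long_if_multiple_neighbour:
  assumes i: "i \<in> {1..n}" and j: "j \<in> {1..n}" and "C j i = -1" "C i j \<le> -2"
  shows "dd j = lacing n dd"
proof -
  have "int (dd j) = int (dd i) * (- C i j)"
    using cartan_symmetrized[OF i j] assms(3) by simp
  moreover have "int (dd i) * 1 \<le> int (dd i) * (- C i j)"
    using assms(4) by (intro mult_left_mono) auto
  ultimately have "dd i \<le> dd j" by linarith
  moreover have "multiple_bond i j"
    using assms cartan_diag[OF i] by (auto simp: multiple_bond_def bond_def)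
  ultimately have "\<forall>x\<in>{1..n}. dd x \<le> dd j"
    using symmetrizer_le_if_multiple_bond by blast
  moreover obtain k where "k \<in> {1..n}" "dd k = lacing n dd"
    using lacing_attained[of n dd] j by auto
  ultimately show ?thesis
    using symmetrizer_le_lacing[of j n dd] j by fastforce
qed

lemma double_bond_symmetrizers:
  assumes i: "i \<in> {1..n}" and j: "j \<in> {1..n}" and "C j i = -2"
  shows "dd j = 1" and "lacing n dd = 2"
proof -
  have "C i j = -1" using cartan_entry_opposite_multiple[OF i j] assms(3) by simp
  then have di: "dd i = 2 * dd j" and "multiple_bond j i"
    using cartan_symmetrized[OF i j] assms(3) cartan_diag[OF i] i j
    by (auto simp: multiple_bond_def bond_def)
  then have two_values: "dd x = dd j \<or> dd x = 2 * dd j" if "x \<in> {1..n}" for x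
    using symmetrizer_values[OF \<open>multiple_bond j i\<close> that] by auto
  have "dd j dvd Gcd (dd ` {1..n})"
    using two_values by (force intro!: Gcd_greatest)
  then show "dd j = 1" using Gcd_symmetrizers by simp
  moreover have "lacing n dd = dd i"
    using lacing_attained[of n dd] j symmetrizer_le_lacing[of i n dd] i two_values di by fastforce
  ultimately show "lacing n dd = 2" using di by simp
qed

lemma triple_bond_symmetrizers:
  assumes i: "i \<in> {1..n}" and j: "j \<in> {1..n}" and "C j i = -3"
  shows "dd j + 1 \<noteq> lacing n dd"
proof -
  have "C i j = -1" using cartan_entry_opposite_multiple[OF i j] assms(3) by simp
  then have "dd i = 3 * dd j" using cartan_symmetrized[OF i j] assms(3) by simp
  then show ?thesis using symmetrizer_le_lacing[of i n dd] i symmetrizer_pos[OF j] by simp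
qed

lemma cartan_W_compatible: "W_compatible n C dd"
  unfolding W_compatible_def
proof (intro ballI conjI impI)
  fix i j assume i: "i \<in> {1..n}" and j: "j \<in> {1..n}"
  show "shortness n dd j = 0 \<or> shortness n dd j = shortness n dd i" if "C j i = -1"
  proof (cases "C i j = -1")
    case True
    then have "dd i = dd j" using same_symmetrizer_if_simple[OF i j] that by simp
    then show ?thesis by (simp add: shortness_def)
  next
    case False
    with that have "C i j \<le> -2"
      using cartan_offdiag_nonpos[OF i j] cartan_zero_iff[OF i j] cartan_diag[OF i] by fastforce
    then show ?thesis
      using long_if_multiple_neighbour[OF i j that] by (simp add: shortness_def)
  qed
  show "shortness n dd j \<le> 1" if "C j i = -2"
    using double_bond_symmetrizers[OF i j that] by (simp add: shortness_def)
  show "shortness n dd j \<noteq> 1" if "C j i = -3"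
    using triple_bond_symmetrizers[OF i j that] by (simp add: shortness_def)
qed

end

theorem mainTheorem1:
  fixes n :: nat and C :: "nat \<Rightarrow> nat \<Rightarrow> int" and dd :: "nat \<Rightarrow> nat" and q :: complex
  assumes "cartan_simple n C dd"
    and "not_root_of_unity q"
  shows "\<forall>w\<in>weyl_group n C. \<forall>f\<in>Wsubring n dd q. Tw n C dd q w f \<in> Wsubring n dd q"
proof -
  interpret simple_cartan n C dd
    using assms(1) by unfold_locales
  have "q \<noteq> 0"
    using assms(2) by (simp add: not_root_of_unity_def)
  with cartan_W_compatible show ?thesis
    by (blast intro: Tw_Wsubring)
qed

end
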